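(* $\displaystyle\min_{\underline y\in\mathcal F}\sum_{j\in\tilde R}c_jy_j=\min_{\underline x\in\mathcal F_0}\sum_{j\in\tilde R}c_jx_j$. That is, the optimum value of the node-cut integer linear program equals the optimum cost of the multi-sink relay placement problem with hop bound $h_{\max}$.
   Context: Let $G=(V,E)$ be a finite undirected graph with $V=Q\cup R\cup B$ (pairwise disjoint), where $Q$ is the set of sources, $R$ the set of potential relay locations and $B$ the set of potential sink locations; let $h_{\max}$ be a positive integer and $c_s,c_r\ge0$. Form the augmented graph $\tilde G=(\tilde V,\tilde E)$ with $\tilde V=V\cup\{0\}$, where $0$ is a new vertex (virtual sink), and $\tilde E=E\cup\{\{0,b\}:b\in B\}$. Let $\tilde R=R\cup B$ with node costs $c_j=c_r$ for $j\in R$ and $c_j=c_s$ for $j\in B$. For a source $k\in Q$, a node cut for $k$ is a set $\gamma\subseteq\tilde V\setminus\{k,0\}$ whose deletion disconnects $k$ from $0$ in $\tilde G$; it is minimal if no proper subset is a node cut; $\Gamma^k$ denotes the set of minimal node cuts for $k$. A vector $\underline y=((y_{j,k})_{k\in Q,\,j\in\tilde V\setminus\{k,0\}},(y_j)_{j\in\tilde R})$ belongs to $\mathcal F$ (the feasible set of the ILP minimizing $\sum_{j\in\tilde R}c_jy_j$) iff: (i) $\sum_{j\in\gamma}y_{j,k}\ge1$ for all $\gamma\in\Gamma^k$, $k\in Q$; (ii) $y_j\ge y_{j,k}$ for all $j\in\tilde R$, $k\in Q$; (iii) $\sum_{j\in\tilde V\setminus\{k,0\}}y_{j,k}\le h_{\max}$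 for all $k\in Q$; (iv) all $y_{j,k},y_j\in\{0,1\}$. For $k\in Q$ let $\mathcal P'_k$ be the set of paths in $\tilde G$ from $k$ to $0$ with at most $h_{\max}+1$ edges, and let $\mathcal U_0$ be the set of tuples $\underline g=(p_k)_{k\in Q}$ with $p_k\in\mathcal P'_k$. For $\underline g\in\mathcal U_0$ define $\underline x(\underline g)$ by $x_{j,k}=1$ if $j$ is a vertex of $p_k$ and $0$ otherwise ($k\in Q$, $j\in\tilde V\setminus\{k,0\}$), and $x_j=1$ if $x_{j,k}=1$ for some $k\in Q$ and $0$ otherwise ($j\in\tilde R$). Let $\mathcal F_0=\{\underline x(\underline g):\underline g\in\mathcal U_0\}$; the minimum cost over $\mathcal F_0$ is the optimum cost of selecting sinks (cost $c_s$ each) and relays (cost $c_r$ each) so that every source has a path of at most $h_{\max}$ hops to a selected sink. A minimum over an empty set is taken to be $+\infty$. *)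

theory Defs
  imports Complex_Main "HOL-Library.Extended_Real"
begin

text \<open>Augmented graph: the virtual sink 0 is None, an original vertex v is Some v.\<close>

definition aug_V :: "'v set \<Rightarrow> 'v option set" where
  "aug_V V = Some ` V \<union> {None}"

definition aug_E :: "'v set set \<Rightarrow> 'v set \<Rightarrow> 'v option set set" where
  "aug_E E B = (\<lambda>e. Some ` e) ` E \<union> {{None, Some b} | b. b \<in> B}"

definition aug_R :: "'v set \<Rightarrow> 'v set \<Rightarrow> 'v option set" where
  "aug_R R B = Some ` (R \<union> B)"

definition node_cost :: "'v set \<Rightarrow> real \<Rightarrow> real \<Rightarrow> 'v option \<Rightarrow> real" where
  "node_cost R cs cr j = (if j \<in> Some ` R then cr else cs)"

definition connected_in :: "'a set set \<Rightarrow> 'a set \<Rightarrow> 'a \<Rightarrow> 'a \<Rightarrow> bool" where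
  "connected_in Ed W a b \<longleftrightarrow> a \<in> W \<and> b \<in> W \<and>
     (a, b) \<in> {(u, v). u \<in> W \<and> v \<in> W \<and> {u, v} \<in> Ed}\<^sup>*"

definition is_node_cut :: "'v set \<Rightarrow> 'v set set \<Rightarrow> 'v set \<Rightarrow> 'v \<Rightarrow> 'v option set \<Rightarrow> bool" where
  "is_node_cut V E B k \<gamma> \<longleftrightarrow>
     \<gamma> \<subseteq> aug_V V - {Some k, None} \<and>
     \<not> connected_in (aug_E E B) (aug_V V - \<gamma>) (Some k) None"

definition min_node_cuts :: "'v set \<Rightarrow> 'v set set \<Rightarrow> 'v set \<Rightarrow> 'v \<Rightarrow> 'v option set set" where
  "min_node_cuts V E B k =
     {\<gamma>. is_node_cut V E B k \<gamma> \<and> (\<forall>\<gamma>'. \<gamma>' \<subset> \<gamma> \<longrightarrow> \<not> is_node_cut V E B k \<gamma>')}"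

text \<open>Feasible set F of the node-cut ILP.  A vector is a pair (yk, yv) with
  yk k j = y_{j,k} (k in Q, j in V~ - {k,0}) and yv j = y_j (j in R~);
  entries outside these index sets are fixed to 0.\<close>

definition ILP_feasible ::
  "'v set \<Rightarrow> 'v set \<Rightarrow> 'v set \<Rightarrow> 'v set \<Rightarrow> 'v set set \<Rightarrow> nat \<Rightarrow>
   (('v \<Rightarrow> 'v option \<Rightarrow> real) \<times> ('v option \<Rightarrow> real)) set" where
  "ILP_feasible V Q R B E h =
     {(yk, yv).
        (\<forall>k j. \<not> (k \<in> Q \<and> j \<in> aug_V V - {Some k, None}) \<longrightarrow> yk k j = 0) \<and>
        (\<forall>j. j \<notin> aug_R R B \<longrightarrow> yv j = 0) \<and>
        (\<forall>k\<in>Q. \<forall>\<gamma>\<in>min_node_cuts V E B k. (\<Sum>j\<in>\<gamma>. yk k j) \<ge> 1) \<and>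
        (\<forall>j\<in>aug_R R B. \<forall>k\<in>Q. yv j \<ge> yk k j) \<and>
        (\<forall>k\<in>Q. (\<Sum>j\<in>aug_V V - {Some k, None}. yk k j) \<le> real h) \<and>
        (\<forall>k\<in>Q. \<forall>j\<in>aug_V V - {Some k, None}. yk k j \<in> {0, 1}) \<and>
        (\<forall>j\<in>aug_R R B. yv j \<in> {0, 1})}"

definition is_path :: "'a set \<Rightarrow> 'a set set \<Rightarrow> 'a list \<Rightarrow> 'a \<Rightarrow> 'a \<Rightarrow> bool" where
  "is_path W Ed p a b \<longleftrightarrow> p \<noteq> [] \<and> hd p = a \<and> last p = b \<and> distinct p \<and>
     set p \<subseteq> W \<and> (\<forall>i. Suc i < length p \<longrightarrow> {p ! i, p ! Suc i} \<in> Ed)"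

definition hop_paths :: "'v set \<Rightarrow> 'v set set \<Rightarrow> 'v set \<Rightarrow> nat \<Rightarrow> 'v \<Rightarrow> 'v option list set" where
  "hop_paths V E B h k =
     {p. is_path (aug_V V) (aug_E E B) p (Some k) None \<and> length p - 1 \<le> h + 1}"

definition path_tuples :: "'v set \<Rightarrow> 'v set \<Rightarrow> 'v set \<Rightarrow> 'v set set \<Rightarrow> nat \<Rightarrow> ('v \<Rightarrow> 'v option list) set" where
  "path_tuples V Q B E h = {g. \<forall>k\<in>Q. g k \<in> hop_paths V E B h k}"

definition x_of ::
  "'v set \<Rightarrow> 'v set \<Rightarrow> 'v set \<Rightarrow> 'v set \<Rightarrow> ('v \<Rightarrow> 'v option list) \<Rightarrow>
   ('v \<Rightarrow> 'v option \<Rightarrow> real) \<times> ('v option \<Rightarrow> real)" where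
  "x_of V Q R B g =
     (let xk = (\<lambda>k j. if k \<in> Q \<and> j \<in> aug_V V - {Some k, None} \<and> j \<in> set (g k)
                       then 1 else 0 :: real)
      in (xk, (\<lambda>j. if j \<in> aug_R R B \<and> (\<exists>k\<in>Q. xk k j = 1) then 1 else 0)))"

definition F0 ::
  "'v set \<Rightarrow> 'v set \<Rightarrow> 'v set \<Rightarrow> 'v set \<Rightarrow> 'v set set \<Rightarrow> nat \<Rightarrow>
   (('v \<Rightarrow> 'v option \<Rightarrow> real) \<times> ('v option \<Rightarrow> real)) set" where
  "F0 V Q R B E h = x_of V Q R B ` path_tuples V Q B E h"

definition total_cost ::
  "'v set \<Rightarrow> 'v set \<Rightarrow> real \<Rightarrow> real \<Rightarrow>
   ('v \<Rightarrow> 'v option \<Rightarrow> real) \<times> ('v option \<Rightarrow> real) \<Rightarrow> real" where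
  "total_cost R B cs cr y = (\<Sum>j\<in>aug_R R B. node_cost R cs cr j * snd y j)"

text \<open>Minimum of a cost over a set of vectors, +infinity over the empty set.\<close>

definition min_cost :: "('a \<Rightarrow> real) \<Rightarrow> 'a set \<Rightarrow> ereal" where
  "min_cost f S = (INF s\<in>S. ereal (f s))"

end

theory Submission
  imports Defs
begin

text \<open>Every path tuple yields a feasible ILP vector: a path meets every node cut,
  since otherwise it would connect the source to the virtual sink once the cut is
  deleted, and a simple path with at most \<open>h + 1\<close> edges has at most \<open>h\<close> interior
  vertices.  Conversely, let \<open>y\<close> be feasible and \<open>k\<close> a source.  The support of
  \<open>y_{\<cdot>,k}\<close> together with \<open>k\<close> and \<open>0\<close> connects \<open>k\<close> to \<open>0\<close>, for otherwise its
  complement is a node cut containing a minimal one on which \<open>y_{\<cdot>,k}\<close> vanishes.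
  A simple path inside it has at most \<open>\<Sum>\<^sub>j y_{j,k} \<le> h\<close> interior vertices, and since
  \<open>y_j \<ge> y_{j,k}\<close> the induced path tuple is dominated by \<open>y\<close>; with nonnegative costs it
  is no more expensive, so the two minima coincide.\<close>

lemma rtrancl_of_successively:
  "successively (\<lambda>u v. (u, v) \<in> r) p \<Longrightarrow> p \<noteq> [] \<Longrightarrow> (hd p, last p) \<in> r\<^sup>*"
proof (induction p)
  case Nil
  then show ?case by simp
next
  case (Cons x xs)
  show ?case
  proof (cases "xs = []")
    case True
    then show ?thesis by simp
  next
    case False
    then have "(x, hd xs) \<in> r" "successively (\<lambda>u v. (u, v) \<in> r) xs"
      using Cons.prems by (auto simp: successively_Cons)
    with Cons.IH False show ?thesis
      by (simp add: converse_rtrancl_into_rtrancl)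
  qed
qed

lemma rtrancl_imp_distinct_successively:
  "(a, b) \<in> r\<^sup>* \<Longrightarrow> \<exists>p. p \<noteq> [] \<and> hd p = a \<and> last p = b \<and> distinct p \<and>
     set p \<subseteq> insert a (Range r) \<and> successively (\<lambda>u v. (u, v) \<in> r) p"
proof (induction rule: converse_rtrancl_induct)
  case base
  show ?case by (rule exI[of _ "[b]"]) simp
next
  case (step a y)
  then obtain p where p: "p \<noteq> []" "hd p = y" "last p = b" "distinct p"
     "set p \<subseteq> insert y (Range r)" "successively (\<lambda>u v. (u, v) \<in> r) p" by blast
  have "y \<in> Range r" using step(1) by blast
  show ?case
  proof (cases "a \<in> set p")
    case True
    \<comment> \<open>shortcut the cycle through \<open>a\<close>\<close>
    then obtain us vs where uv: "p = us @ a # vs" by (meson split_list)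
    show ?thesis
      by (rule exI[of _ "a # vs"])
        (use p uv \<open>y \<in> Range r\<close> in \<open>auto simp: successively_append_iff\<close>)
  next
    case False
    show ?thesis
      by (rule exI[of _ "a # p"])
        (use p False step(1) \<open>y \<in> Range r\<close> in \<open>auto simp: successively_Cons\<close>)
  qed
qed

lemma is_path_imp_connected_in:
  assumes "is_path W Ed p a b"
  shows "connected_in Ed W a b"
proof -
  have p: "p \<noteq> []" "hd p = a" "last p = b" "set p \<subseteq> W"
    "\<forall>i. Suc i < length p \<longrightarrow> {p ! i, p ! Suc i} \<in> Ed"
    using assms unfolding is_path_def by auto
  have "successively (\<lambda>u v. (u, v) \<in> {(u, v). u \<in> W \<and> v \<in> W \<and> {u, v} \<in> Ed}) p"
    unfolding successively_conv_nth using p by (auto intro: nth_mem[THEN subsetD[OF p(4)]])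
  from rtrancl_of_successively[OF this p(1)] show ?thesis
    unfolding connected_in_def using p hd_in_set last_in_set by blast
qed

lemma connected_in_imp_is_path:
  assumes "connected_in Ed W a b"
  shows "\<exists>p. is_path W Ed p a b"
proof -
  define r where "r = {(u, v). u \<in> W \<and> v \<in> W \<and> {u, v} \<in> Ed}"
  have "(a, b) \<in> r\<^sup>*" "a \<in> W" using assms unfolding connected_in_def r_def by auto
  from rtrancl_imp_distinct_successively[OF this(1)] obtain p where p: "p \<noteq> []"
    "hd p = a" "last p = b" "distinct p" "set p \<subseteq> insert a (Range r)"
    "successively (\<lambda>u v. (u, v) \<in> r) p"
    by blast
  have "set p \<subseteq> W" using p(5) \<open>a \<in> W\<close> unfolding r_def by auto
  moreover have "successively (\<lambda>u v. {u, v} \<in> Ed) p"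
    using p(6) by (rule successively_mono) (auto simp: r_def)
  ultimately show ?thesis
    unfolding is_path_def successively_conv_nth using p(1-4) by blast
qed

lemma is_path_mono: "is_path W Ed p a b \<Longrightarrow> W \<subseteq> W' \<Longrightarrow> is_path W' Ed p a b"
  unfolding is_path_def by blast

lemma card_inner_vertices_of_path:
  assumes "is_path W Ed p a b" "a \<noteq> b"
  shows "card (set p - {a, b}) = length p - 2"
proof -
  have "p \<noteq> []" "hd p = a" "last p = b" "distinct p"
    using assms(1) unfolding is_path_def by auto
  then have "{a, b} \<subseteq> set p" using hd_in_set last_in_set by blast
  then show ?thesis
    using card_Diff_subset[of "{a, b}" "set p"] \<open>distinct p\<close> assms(2)
    by (simp add: distinct_card)
qed

lemma finite_aug_V: "finite V \<Longrightarrow> finite (aug_V V)"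
  unfolding aug_V_def by simp

lemma node_cut_contains_min_node_cut:
  "finite C \<Longrightarrow> is_node_cut V E B k C \<Longrightarrow> \<exists>\<gamma>\<subseteq>C. \<gamma> \<in> min_node_cuts V E B k"
proof (induction "card C" arbitrary: C rule: less_induct)
  case less
  show ?case
  proof (cases "\<forall>\<gamma>'. \<gamma>' \<subset> C \<longrightarrow> \<not> is_node_cut V E B k \<gamma>'")
    case True
    then show ?thesis using less.prems unfolding min_node_cuts_def by blast
  next
    case False
    then obtain C' where C': "C' \<subset> C" "is_node_cut V E B k C'" by blast
    have "finite C'" "card C' < card C"
      using C'(1) less.prems(1) by (auto intro: rev_finite_subset psubset_card_mono)
    with less.hyps C' show ?thesis by (meson psubset_imp_subset subset_trans)
  qed
qed

lemma hop_path_meets_node_cut: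
  assumes "is_path (aug_V V) (aug_E E B) p (Some k) None" "is_node_cut V E B k \<gamma>"
  shows "set p \<inter> \<gamma> \<noteq> {}"
proof
  assume "set p \<inter> \<gamma> = {}"
  with assms(1) have "is_path (aug_V V - \<gamma>) (aug_E E B) p (Some k) None"
    unfolding is_path_def by blast
  then have "connected_in (aug_E E B) (aug_V V - \<gamma>) (Some k) None"
    by (rule is_path_imp_connected_in)
  with assms(2) show False unfolding is_node_cut_def by simp
qed

lemma sum_01_eq_card:
  assumes "finite A" "\<forall>j\<in>A. f j \<in> {0, 1::real}"
  shows "(\<Sum>j\<in>A. f j) = real (card {j\<in>A. f j = 1})"
proof -
  have "(\<Sum>j\<in>A. f j) = (\<Sum>j\<in>A. if f j = 1 then 1 else 0)"
    using assms(2) by (intro sum.cong) auto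
  also have "\<dots> = real (card {j\<in>A. f j = 1})"
    using sum.inter_filter[OF assms(1), of "\<lambda>_. 1::real" "\<lambda>j. f j = 1"] by simp
  finally show ?thesis .
qed

lemma x_of_in_ILP_feasible:
  assumes "finite V" "g \<in> path_tuples V Q B E h"
  shows "x_of V Q R B g \<in> ILP_feasible V Q R B E h"
proof -
  define xk where "xk = (\<lambda>k j. if k \<in> Q \<and> j \<in> aug_V V - {Some k, None} \<and> j \<in> set (g k)
                       then 1 else 0 :: real)"
  define xv where "xv = (\<lambda>j. if j \<in> aug_R R B \<and> (\<exists>k\<in>Q. xk k j = 1) then 1 else (0::real))"
  have x: "x_of V Q R B g = (xk, xv)" unfolding x_of_def Let_def xk_def xv_def by simp
  have fin: "finite (aug_V V)" using assms(1) by (rule finite_aug_V)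
  have path: "is_path (aug_V V) (aug_E E B) (g k) (Some k) None" "length (g k) - 1 \<le> h + 1"
    if "k \<in> Q" for k
    using assms(2) that unfolding path_tuples_def hop_paths_def by auto
  have cut: "(\<Sum>j\<in>\<gamma>. xk k j) \<ge> 1" if k: "k \<in> Q" and "\<gamma> \<in> min_node_cuts V E B k" for k \<gamma>
  proof -
    have \<gamma>: "is_node_cut V E B k \<gamma>" "\<gamma> \<subseteq> aug_V V - {Some k, None}"
      using that(2) unfolding min_node_cuts_def is_node_cut_def by auto
    obtain j where j: "j \<in> \<gamma>" "j \<in> set (g k)"
      using hop_path_meets_node_cut[OF path(1)[OF k] \<gamma>(1)] by blast
    have "finite \<gamma>" using \<gamma>(2) fin by (meson finite_Diff rev_finite_subset)
    moreover have "xk k j = 1" using j \<gamma>(2) k unfolding xk_def by auto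
    ultimately show ?thesis using member_le_sum[of j \<gamma> "xk k"] j(1) unfolding xk_def by auto
  qed
  have hop: "(\<Sum>j\<in>aug_V V - {Some k, None}. xk k j) \<le> real h" if "k \<in> Q" for k
  proof -
    let ?A = "aug_V V - {Some k, None}"
    have "(\<Sum>j\<in>?A. xk k j) = real (card {j\<in>?A. xk k j = 1})"
      using fin by (intro sum_01_eq_card) (auto simp: xk_def)
    also have "card {j\<in>?A. xk k j = 1} \<le> card (set (g k) - {Some k, None})"
      by (rule card_mono) (auto simp: xk_def)
    also have "\<dots> = length (g k) - 2"
      using card_inner_vertices_of_path[OF path(1)[OF that]] by simp
    finally show ?thesis using path(2)[OF that] by linarith
  qed
  show ?thesis
    unfolding x ILP_feasible_def using cut hop by (auto simp: xk_def xv_def)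
qed

lemma ILP_support_connects:
  assumes "finite V" "k \<in> V" "k \<in> Q" "(yk, yv) \<in> ILP_feasible V Q R B E h"
  shows "connected_in (aug_E E B)
           (insert (Some k) (insert None {j \<in> aug_V V - {Some k, None}. yk k j = 1})) (Some k) None"
proof (rule ccontr)
  let ?A = "aug_V V - {Some k, None}"
  define S where "S = {j \<in> ?A. yk k j = 1}"
  assume "\<not> connected_in (aug_E E B) (insert (Some k) (insert None S)) (Some k) None"
  moreover have "aug_V V - (?A - S) = insert (Some k) (insert None S)"
  proof -
    have "Some k \<in> aug_V V" "None \<in> aug_V V" using assms(2) unfolding aug_V_def by auto
    moreover have "S \<subseteq> ?A" unfolding S_def by blast
    ultimately show ?thesis by blast
  qed
  ultimately have "is_node_cut V E B k (?A - S)" unfolding is_node_cut_def by simp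
  moreover have "finite (?A - S)" using finite_aug_V[OF assms(1)] by simp
  ultimately obtain \<gamma> where \<gamma>: "\<gamma> \<subseteq> ?A - S" "\<gamma> \<in> min_node_cuts V E B k"
    using node_cut_contains_min_node_cut by metis
  have y01: "\<forall>j\<in>?A. yk k j \<in> {0, 1}" and "\<forall>\<gamma>\<in>min_node_cuts V E B k. (\<Sum>j\<in>\<gamma>. yk k j) \<ge> 1"
    using assms(3,4) unfolding ILP_feasible_def by auto
  then have "(\<Sum>j\<in>\<gamma>. yk k j) \<ge> 1" using \<gamma>(2) by blast
  moreover have "(\<Sum>j\<in>\<gamma>. yk k j) = 0"
    using \<gamma>(1) y01 unfolding S_def by (intro sum.neutral) auto
  ultimately show False by simp
qed

lemma ILP_support_hop_path:
  assumes "finite V" "k \<in> V" "k \<in> Q" "(yk, yv) \<in> ILP_feasible V Q R B E h"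
  shows "\<exists>p\<in>hop_paths V E B h k.
     set p \<subseteq> insert (Some k) (insert None {j \<in> aug_V V - {Some k, None}. yk k j = 1})"
proof -
  let ?A = "aug_V V - {Some k, None}"
  define S where "S = {j \<in> ?A. yk k j = 1}"
  define W where "W = insert (Some k) (insert None S)"
  obtain p where p: "is_path W (aug_E E B) p (Some k) None"
    using connected_in_imp_is_path[OF ILP_support_connects[OF assms]] unfolding W_def S_def ..
  have fin: "finite (aug_V V)" using assms(1) by (rule finite_aug_V)
  have "W \<subseteq> aug_V V" using assms(2) unfolding W_def S_def aug_V_def by auto
  then have path: "is_path (aug_V V) (aug_E E B) p (Some k) None" by (rule is_path_mono[OF p])
  have "real (card S) = (\<Sum>j\<in>?A. yk k j)"
    using fin assms(3,4) unfolding S_def ILP_feasible_def by (subst sum_01_eq_card) auto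
  also have "\<dots> \<le> real h" using assms(3,4) unfolding ILP_feasible_def by auto
  finally have "card S \<le> h" by simp
  have "length p = card (set p)" using p unfolding is_path_def by (simp add: distinct_card)
  also have "\<dots> \<le> card W"
    using p fin unfolding is_path_def W_def S_def by (intro card_mono) auto
  also have "\<dots> \<le> card S + 2" unfolding W_def by (simp add: card_insert_le_m1 card_insert_if)
  finally have "length p - 1 \<le> h + 1" using \<open>card S \<le> h\<close> by linarith
  with path p show ?thesis unfolding hop_paths_def is_path_def W_def S_def by blast
qed

lemma ILP_feasible_dominated_by_F0:
  assumes "finite V" "Q \<subseteq> V" "y \<in> ILP_feasible V Q R B E h" "cs \<ge> 0" "cr \<ge> 0"
  shows "\<exists>x\<in>F0 V Q R B E h. total_cost R B cs cr x \<le> total_cost R B cs cr y"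
proof -
  obtain yk yv where y: "y = (yk, yv)" by (cases y)
  define P where "P = (\<lambda>k p. p \<in> hop_paths V E B h k \<and>
     set p \<subseteq> insert (Some k) (insert None {j \<in> aug_V V - {Some k, None}. yk k j = 1}))"
  define g where "g = (\<lambda>k. SOME p. P k p)"
  have gP: "P k (g k)" if "k \<in> Q" for k
  proof -
    have "k \<in> V" using assms(2) that ..
    from ILP_support_hop_path[OF assms(1) this that assms(3)[unfolded y]]
    have "\<exists>p. P k p" unfolding P_def by blast
    then show ?thesis unfolding g_def by (rule someI_ex)
  qed
  then have "g \<in> path_tuples V Q B E h" unfolding path_tuples_def P_def by blast
  then have x: "x_of V Q R B g \<in> F0 V Q R B E h" unfolding F0_def by blast
  have yv: "\<forall>j\<in>aug_R R B. yv j \<in> {0, 1}" "\<forall>j\<in>aug_R R B. \<forall>k\<in>Q. yv j \<ge> yk k j"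
    using assms(3) unfolding y ILP_feasible_def by auto
  have "snd (x_of V Q R B g) j \<le> yv j" if "j \<in> aug_R R B" for j
  proof (cases "\<exists>k\<in>Q. j \<in> aug_V V - {Some k, None} \<and> j \<in> set (g k)")
    case True
    then obtain k where "k \<in> Q" "j \<in> aug_V V - {Some k, None}" "j \<in> set (g k)" by blast
    then have "yk k j = 1" using gP unfolding P_def by blast
    then show ?thesis using yv that \<open>k \<in> Q\<close> unfolding x_of_def Let_def by fastforce
  next
    case False
    then show ?thesis using yv that unfolding x_of_def Let_def by auto
  qed
  moreover have "node_cost R cs cr j \<ge> 0" for j
    unfolding node_cost_def using assms(4,5) by auto
  ultimately have "total_cost R B cs cr (x_of V Q R B g) \<le> total_cost R B cs cr y"
    unfolding total_cost_def y snd_conv by (intro sum_mono mult_left_mono) auto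
  with x show ?thesis by blast
qed

lemma min_cost_eq_if_dominated:
  assumes "S \<subseteq> T" "\<forall>t\<in>T. \<exists>s\<in>S. f s \<le> f t"
  shows "min_cost f T = min_cost f S"
  unfolding min_cost_def
proof (rule antisym)
  show "(INF t\<in>T. ereal (f t)) \<le> (INF s\<in>S. ereal (f s))"
    using assms(1) by (rule INF_superset_mono) simp
  show "(INF s\<in>S. ereal (f s)) \<le> (INF t\<in>T. ereal (f t))"
    using assms(2) by (intro INF_mono) auto
qed

theorem theorem4:
  fixes V Q R B :: "'v set" and E :: "'v set set" and h :: nat and cs cr :: real
  assumes "finite V"
    and "V = Q \<union> R \<union> B"
    and "Q \<inter> R = {}" and "Q \<inter> B = {}" and "R \<inter> B = {}"
    and "\<forall>e\<in>E. \<exists>u v. e = {u, v} \<and> u \<in> V \<and> v \<in> V \<and> u \<noteq> v"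
    and "h > 0" and "cs \<ge> 0" and "cr \<ge> 0"
  shows "min_cost (total_cost R B cs cr) (ILP_feasible V Q R B E h)
       = min_cost (total_cost R B cs cr) (F0 V Q R B E h)"
proof (rule min_cost_eq_if_dominated)
  have "Q \<subseteq> V" using assms(2) by blast
  show "F0 V Q R B E h \<subseteq> ILP_feasible V Q R B E h"
    unfolding F0_def using x_of_in_ILP_feasible[OF assms(1)] by blast
  show "\<forall>y\<in>ILP_feasible V Q R B E h. \<exists>x\<in>F0 V Q R B E h.
          total_cost R B cs cr x \<le> total_cost R B cs cr y"
    using ILP_feasible_dominated_by_F0[OF assms(1) \<open>Q \<subseteq> V\<close> _ assms(8,9)] by blast
qed

end
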